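(* Let $\mathcal{G}$ be a locally finite Borel graph on a standard probability space $(X,\mu)$. Let $M$ be a positive integer, let $r\in(0,1)$, and let $(A_n)_{n\in\mathbb{N}}$ be a sequence of pairwise disjoint Borel subsets of $X$. For each $n\in\mathbb{N}$ define $B_n=\bigcup_{k\le n}A_k$ and $\mathcal{G}_n=\mathcal{G}\restriction(X\setminus B_{n-1})$, where $B_{-1}=\emptyset$. Assume that for each $n\in\mathbb{N}$: (1) $\mu(X\setminus B_n)\le r\,\mu(X\setminus B_{n-1})$, and (2) $\deg_{\mathcal{G}_n}(x)\le M$ for all $x\in A_n$. Then $\chi_\mu^{\mathrm{ap}}(\mathcal{G})\le M+1$.
   Context: A Borel graph on $X$ is a simple undirected graph with Borel edge set; locally finite means every vertex has finite degree. $\mathcal{G}\restriction Y$ is the induced subgraph on $Y$. $\chi_\mu^{\mathrm{ap}}(\mathcal{G})$ is the least $k$ such that for every $\varepsilon>0$ there is a Borel $A\subseteq X$ with $\mu(A)>1-\varepsilon$ such that $\mathcal{G}\restriction A$ admits a $\mu$-measurable proper $k$-coloring. *)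

theory Defs
  imports "HOL-Probability.Probability"
begin

definition standard_prob_space :: "'a::polish_space measure \<Rightarrow> bool" where
  "standard_prob_space \<mu> \<longleftrightarrow> sets \<mu> = sets borel \<and> prob_space \<mu>"

definition borel_graph :: "'a::polish_space measure \<Rightarrow> ('a \<Rightarrow> 'a \<Rightarrow> bool) \<Rightarrow> bool" where
  "borel_graph \<mu> G \<longleftrightarrow> (\<forall>x y. G x y \<longrightarrow> G y x) \<and> (\<forall>x. \<not> G x x)
     \<and> {p. G (fst p) (snd p)} \<in> sets (borel :: ('a \<times> 'a) measure)"

definition locally_finite_graph :: "('a \<Rightarrow> 'a \<Rightarrow> bool) \<Rightarrow> bool" where
  "locally_finite_graph G \<longleftrightarrow> (\<forall>x. finite {y. G x y})"

definition induced_degree :: "('a \<Rightarrow> 'a \<Rightarrow> bool) \<Rightarrow> 'a set \<Rightarrow> 'a \<Rightarrow> nat" where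
  "induced_degree G Y x = card {y \<in> Y. G x y}"

definition measurable_proper_coloring_on ::
  "'a measure \<Rightarrow> ('a \<Rightarrow> 'a \<Rightarrow> bool) \<Rightarrow> 'a set \<Rightarrow> nat \<Rightarrow> bool" where
  "measurable_proper_coloring_on \<mu> G A k \<longleftrightarrow>
     (\<exists>c :: 'a \<Rightarrow> nat. c \<in> measurable (completion \<mu>) (count_space UNIV)
        \<and> (\<forall>x\<in>A. c x < k) \<and> (\<forall>x\<in>A. \<forall>y\<in>A. G x y \<longrightarrow> c x \<noteq> c y))"

definition approx_colorable :: "'a measure \<Rightarrow> ('a \<Rightarrow> 'a \<Rightarrow> bool) \<Rightarrow> nat \<Rightarrow> bool" where
  "approx_colorable \<mu> G k \<longleftrightarrow>
     (\<forall>\<epsilon>>0. \<exists>A\<in>sets \<mu>. measure \<mu> A > 1 - \<epsilon> \<and> measurable_proper_coloring_on \<mu> G A k)"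

text \<open>Approximate measurable chromatic number (infinity if no k works).\<close>
definition chi_ap :: "'a measure \<Rightarrow> ('a \<Rightarrow> 'a \<Rightarrow> bool) \<Rightarrow> enat" where
  "chi_ap \<mu> G = Inf {enat k | k. approx_colorable \<mu> G k}"

end

theory Submission
  imports Defs
begin

text \<open>Colour the stages A n in reverse order. A point of A n has at most M neighbours in
  A n \<union> A (n + 1) \<union> ..., so a greedy colouring that treats later stages first, and inside a
  stage follows a countable Borel colouring (so that points treated simultaneously are never
  adjacent), needs only M + 1 colours. The decay condition makes the union of the stages
  conull, so finitely many stages and finitely many classes of the countable colouring cover
  all of the space but \<epsilon>.

  Measurability is the delicate point: each greedy step needs the neighbourhood of a Borel
  set, which is the projection of a Borel set and hence only analytic. Analytic sets are
  universally measurable, so such a neighbourhood agrees with a Borel set off a null set,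
  and the countably many exceptional null sets used by the construction are discarded.\<close>

section \<open>Baire space\<close>

lemma tendsto_baire_iff:
  fixes s :: "'i \<Rightarrow> nat \<Rightarrow> nat"
  shows "(s \<longlongrightarrow> \<alpha>) F \<longleftrightarrow> (\<forall>i. eventually (\<lambda>k. s k i = \<alpha> i) F)"
proof -
  have "(s \<longlongrightarrow> \<alpha>) F \<longleftrightarrow> limitin (product_topology (\<lambda>i. euclidean) UNIV) s \<alpha> F"
    by (simp add: euclidean_product_topology)
  also have "\<dots> \<longleftrightarrow> (\<forall>i. ((\<lambda>k. s k i) \<longlongrightarrow> \<alpha> i) F)"
    by (simp add: limitin_componentwise)
  finally show ?thesis
    by (simp add: tendsto_discrete)
qed

lemma open_Collect_coordinate: "open {\<alpha>::'i \<Rightarrow> 'b::discrete_topology. \<alpha> n \<in> S}"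
proof -
  have "open ((\<lambda>\<alpha>::'i \<Rightarrow> 'b. \<alpha> n) -` S)"
    by (rule open_vimage[OF discrete_topology_class.open_discrete continuous_on_product_coordinates])
  then show ?thesis by (simp add: vimage_def)
qed

lemma closed_Collect_coordinates:
  "closed {\<alpha>::'i \<Rightarrow> 'b::discrete_topology. P (\<alpha> n) (\<alpha> m)}"
proof -
  have "{\<alpha>::'i \<Rightarrow> 'b. P (\<alpha> n) (\<alpha> m)} =
     (\<Inter>p\<in>{p. \<not> P (fst p) (snd p)}. - ({\<alpha>. \<alpha> n \<in> {fst p}} \<inter> {\<alpha>. \<alpha> m \<in> {snd p}}))"
    by auto
  then show ?thesis
    by (simp only:) (intro closed_INT ballI closed_Compl open_Int open_Collect_coordinate)
qed

lemma compact_baire_box: "compact {\<alpha>::nat \<Rightarrow> nat. \<forall>i. \<alpha> i \<le> b i}"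
proof -
  have "compactin (product_topology (\<lambda>i. euclidean) UNIV) (Pi\<^sub>E UNIV (\<lambda>i. {..b i}))"
    by (simp add: compactin_PiE finite_imp_compact)
  moreover have "{\<alpha>::nat \<Rightarrow> nat. \<forall>i. \<alpha> i \<le> b i} = Pi\<^sub>E UNIV (\<lambda>i. {..b i})"
    by (auto simp: PiE_iff)
  ultimately show ?thesis
    by (simp add: euclidean_product_topology)
qed

lemma continuous_on_localI:
  assumes "\<And>x. x \<in> S \<Longrightarrow> \<exists>U. open U \<and> x \<in> U \<and> continuous_on (S \<inter> U) f"
  shows "continuous_on S f"
  unfolding continuous_on_def
proof
  fix x assume "x \<in> S"
  then obtain U where U: "open U" "x \<in> U" "continuous_on (S \<inter> U) f"
    using assms by blast
  have "at x within S = at x within (S \<inter> U)"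
    using U by (intro at_within_nhd[of _ U]) auto
  then show "(f \<longlongrightarrow> f x) (at x within S)"
    using U \<open>x \<in> S\<close> by (simp add: continuous_on_def)
qed

lemma continuous_on_reindex: "continuous_on UNIV (\<lambda>\<alpha>::'i \<Rightarrow> 'b::topological_space. \<lambda>i. \<alpha> (g i))"
  by (intro continuous_on_coordinatewise_then_product continuous_on_product_coordinates)

section \<open>Analytic sets\<close>

definition analytic :: "'b::topological_space set \<Rightarrow> bool" where
  "analytic P \<longleftrightarrow> (\<exists>(C::(nat \<Rightarrow> nat) set) f. closed C \<and> continuous_on C f \<and> f ` C = P)"

lemma analytic_seqE:
  fixes P :: "nat \<Rightarrow> 'b::topological_space set"
  assumes "\<And>n. analytic (P n)"
  obtains C :: "nat \<Rightarrow> (nat \<Rightarrow> nat) set" and f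
  where "\<And>n. closed (C n)" "\<And>n. continuous_on (C n) (f n)" "\<And>n. f n ` C n = P n"
proof -
  have "\<forall>n. \<exists>(C::(nat \<Rightarrow> nat) set) f. closed C \<and> continuous_on C f \<and> f ` C = P n"
    using assms unfolding analytic_def by blast
  from choice[OF this] obtain C :: "nat \<Rightarrow> (nat \<Rightarrow> nat) set"
    where "\<forall>n. \<exists>f. closed (C n) \<and> continuous_on (C n) f \<and> f ` C n = P n" ..
  from choice[OF this] obtain f :: "nat \<Rightarrow> (nat \<Rightarrow> nat) \<Rightarrow> 'b"
    where "\<forall>n. closed (C n) \<and> continuous_on (C n) (f n) \<and> f n ` C n = P n" ..
  then show thesis
    using that by blast
qed

lemma analytic_continuous_image:
  assumes "continuous_on UNIV g" "analytic P"
  shows "analytic (g ` P)"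
proof -
  from assms(2) obtain C and f :: "(nat \<Rightarrow> nat) \<Rightarrow> _"
    where "closed C" "continuous_on C f" "f ` C = P"
    unfolding analytic_def by blast
  moreover have "continuous_on C (g \<circ> f)"
    using \<open>continuous_on C f\<close> continuous_on_subset[OF assms(1)] by (rule continuous_on_compose) simp
  ultimately show ?thesis
    unfolding analytic_def by (auto simp flip: image_comp)
qed

lemma analytic_UN:
  fixes P :: "nat \<Rightarrow> 'b::topological_space set"
  assumes "\<And>n. analytic (P n)"
  shows "analytic (\<Union>n. P n)"
proof -
  obtain C :: "nat \<Rightarrow> (nat \<Rightarrow> nat) set" and f
    where C: "\<And>n. closed (C n)" and f: "\<And>n. continuous_on (C n) (f n)" "\<And>n. f n ` C n = P n"
    using analytic_seqE[of P] assms by blast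
  \<comment> \<open>the first coordinate selects the piece, the remaining ones parametrise it\<close>
  define shift :: "(nat \<Rightarrow> nat) \<Rightarrow> nat \<Rightarrow> nat" where "shift \<alpha> = (\<lambda>i. \<alpha> (Suc i))" for \<alpha>
  have shift: "continuous_on UNIV shift"
    unfolding shift_def by (rule continuous_on_reindex)
  define C' where "C' = {\<alpha>. shift \<alpha> \<in> C (\<alpha> 0)}"
  define g where "g \<alpha> = f (\<alpha> 0) (shift \<alpha>)" for \<alpha>
  have "- C' = (\<Union>n. {\<alpha>. \<alpha> 0 \<in> {n}} \<inter> shift -` (- C n))"
    unfolding C'_def by auto
  moreover have "open (\<Union>n. {\<alpha>. \<alpha> 0 \<in> {n}} \<inter> shift -` (- C n))"
    using C shift by (intro open_UN ballI open_Int open_Collect_coordinate open_vimage) auto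
  ultimately have "closed C'"
    by (simp add: closed_def)
  moreover have "continuous_on C' g"
  proof (rule continuous_on_localI)
    fix \<alpha> assume "\<alpha> \<in> C'"
    let ?U = "{\<beta>::nat \<Rightarrow> nat. \<beta> 0 \<in> {\<alpha> 0}}"
    have "continuous_on (C' \<inter> ?U) (\<lambda>\<beta>. f (\<alpha> 0) (shift \<beta>))"
      by (rule continuous_on_compose2[OF f(1) continuous_on_subset[OF shift]]) (auto simp: C'_def)
    then have "continuous_on (C' \<inter> ?U) g"
      by (rule continuous_on_cong[THEN iffD1, rotated 2]) (auto simp: g_def)
    moreover have "open ?U"
      by (rule open_Collect_coordinate)
    ultimately show "\<exists>U. open U \<and> \<alpha> \<in> U \<and> continuous_on (C' \<inter> U) g"
      by auto
  qed
  moreover have "g ` C' = (\<Union>n. P n)"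
  proof
    show "g ` C' \<subseteq> (\<Union>n. P n)"
      using f(2) by (auto simp: g_def C'_def)
    show "(\<Union>n. P n) \<subseteq> g ` C'"
    proof
      fix x assume "x \<in> (\<Union>n. P n)"
      then obtain n \<beta> where "\<beta> \<in> C n" "x = f n \<beta>"
        using f(2) by blast
      moreover have "shift (case_nat n \<beta>) = \<beta>"
        by (simp add: shift_def)
      ultimately show "x \<in> g ` C'"
        by (intro image_eqI[of _ _ "case_nat n \<beta>"]) (auto simp: g_def C'_def)
    qed
  qed
  ultimately show ?thesis
    unfolding analytic_def by blast
qed

lemma analytic_empty: "analytic {}"
  unfolding analytic_def by (intro exI[of _ "{}"]) auto

lemma analytic_Union:
  assumes "countable \<U>" "\<And>P. P \<in> \<U> \<Longrightarrow> analytic P"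
  shows "analytic (\<Union>\<U>)"
proof (cases "\<U> = {}")
  case False
  then have "\<Union>\<U> = (\<Union>n. from_nat_into \<U> n)"
    using assms(1) by simp
  also have "analytic \<dots>"
    by (intro analytic_UN assms(2) from_nat_into[OF False])
  finally show ?thesis .
qed (simp add: analytic_empty)

lemma closed_Collect_eq_on:
  fixes f g :: "'a::topological_space \<Rightarrow> 'b::t2_space"
  assumes "closed S" "continuous_on S f" "continuous_on S g"
  shows "closed {x \<in> S. f x = g x}"
proof -
  have "closed (S \<inter> (\<lambda>x. (f x, g x)) -` {y. \<exists>z. y = (z, z)})"
    using assms by (intro continuous_closed_preimage continuous_on_Pair closed_diagonal)
  moreover have "{x \<in> S. f x = g x} = S \<inter> (\<lambda>x. (f x, g x)) -` {y. \<exists>z. y = (z, z)}"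
    by auto
  ultimately show ?thesis
    by simp
qed

lemma analytic_INT:
  fixes P :: "nat \<Rightarrow> 'b::t2_space set"
  assumes "\<And>n. analytic (P n)"
  shows "analytic (\<Inter>n. P n)"
proof -
  obtain C :: "nat \<Rightarrow> (nat \<Rightarrow> nat) set" and f
    where C: "\<And>n. closed (C n)" and f: "\<And>n. continuous_on (C n) (f n)" "\<And>n. f n ` C n = P n"
    using analytic_seqE[of P] assms by blast
  \<comment> \<open>a single sequence codes one parameter for each n, and C' keeps the codes whose
    parameters are mapped to one common point\<close>
  define sub where "sub n \<alpha> = (\<lambda>i. \<alpha> (prod_encode (n, i)))" for n and \<alpha> :: "nat \<Rightarrow> nat"
  have sub: "continuous_on UNIV (sub n)" for n
    unfolding sub_def by (rule continuous_on_reindex)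
  define K where "K n = sub n -` C n" for n
  have K: "closed (K n)" for n
    unfolding K_def by (intro closed_vimage C sub)
  have fK: "continuous_on (K n) (\<lambda>\<alpha>. f n (sub n \<alpha>))" for n
    by (rule continuous_on_compose2[OF f(1) continuous_on_subset[OF sub]]) (auto simp: K_def)
  define C' where "C' = (\<Inter>n. {\<alpha> \<in> K n \<inter> K 0. f n (sub n \<alpha>) = f 0 (sub 0 \<alpha>)})"
  define g where "g \<alpha> = f 0 (sub 0 \<alpha>)" for \<alpha>
  have "closed {\<alpha> \<in> K n \<inter> K 0. f n (sub n \<alpha>) = f 0 (sub 0 \<alpha>)}" for n
    using K continuous_on_subset[OF fK[of n]] continuous_on_subset[OF fK[of 0]]
    by (intro closed_Collect_eq_on closed_Int) auto
  then have "closed C'"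
    unfolding C'_def by blast
  moreover have "continuous_on C' g"
    unfolding g_def using fK by (rule continuous_on_subset) (auto simp: C'_def)
  moreover have "g ` C' = (\<Inter>n. P n)"
  proof
    show "g ` C' \<subseteq> (\<Inter>n. P n)"
    proof (intro subsetI INT_I, elim imageE)
      fix x \<alpha> n assume "\<alpha> \<in> C'" "x = g \<alpha>"
      then have "\<alpha> \<in> K n" "f n (sub n \<alpha>) = f 0 (sub 0 \<alpha>)"
        unfolding C'_def by auto
      then have "sub n \<alpha> \<in> C n" "x = f n (sub n \<alpha>)"
        using \<open>x = g \<alpha>\<close> by (auto simp: K_def g_def)
      then show "x \<in> P n"
        using f(2) by blast
    qed
    show "(\<Inter>n. P n) \<subseteq> g ` C'"
    proof
      fix x assume "x \<in> (\<Inter>n. P n)"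
      then have x_image: "x \<in> f n ` C n" for n
        by (simp add: f(2))
      have "\<exists>\<beta>. \<beta> \<in> C n \<and> f n \<beta> = x" for n
        using x_image[of n] by blast
      then have "\<forall>n. \<exists>\<beta>. \<beta> \<in> C n \<and> f n \<beta> = x"
        by blast
      from choice[OF this] obtain \<beta> where \<beta>: "\<And>n. \<beta> n \<in> C n" "\<And>n. f n (\<beta> n) = x"
        by blast
      define \<alpha> where "\<alpha> j = \<beta> (fst (prod_decode j)) (snd (prod_decode j))" for j
      have "sub n \<alpha> = \<beta> n" for n
        by (simp add: sub_def \<alpha>_def)
      then have "\<alpha> \<in> C'" "g \<alpha> = x"
        using \<beta> by (auto simp: C'_def K_def g_def)
      then show "x \<in> g ` C'"
        by blast
    qed
  qed
  ultimately show ?thesis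
    unfolding analytic_def by blast
qed

lemma geometric_Cauchy_dist_lim:
  fixes x :: "nat \<Rightarrow> 'a::complete_space"
  assumes "\<And>n m. n \<le> m \<Longrightarrow> dist (x n) (x m) \<le> (1/2::real)^n"
  shows "dist (x n) (lim x) \<le> (1/2::real)^n"
proof -
  have "Cauchy x"
  proof (rule metric_CauchyI)
    fix e :: real assume "e > 0"
    then obtain N where N: "(1/2::real)^N < e"
      using real_arch_pow_inv[of e "1/2"] by auto
    have "dist (x m) (x n) < e" if "N \<le> m" "N \<le> n" for m n
    proof -
      have "dist (x m) (x n) \<le> (1/2::real)^(min m n)"
        using assms[of m n] assms[of n m] by (cases "m \<le> n") (auto simp: min_def dist_commute)
      also have "\<dots> \<le> (1/2)^N"
        using that by (intro power_decreasing) auto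
      finally show ?thesis
        using N by simp
    qed
    then show "\<exists>N. \<forall>m\<ge>N. \<forall>n\<ge>N. dist (x m) (x n) < e"
      by blast
  qed
  then have "convergent x"
    by (rule Cauchy_convergent)
  then have lim: "x \<longlonglongrightarrow> lim x"
    by (simp only: convergent_LIMSEQ_iff)
  show ?thesis
    by (rule Lim_bounded[OF tendsto_dist[OF tendsto_const lim], of n]) (simp add: assms)
qed

text \<open>Reading a code \<alpha> as the point lim (d \<circ> \<alpha>) parametrises a complete space with a
  dense sequence d by a closed subset of Baire space.\<close>

definition fast_Cauchy_codes :: "(nat \<Rightarrow> 'a::metric_space) \<Rightarrow> (nat \<Rightarrow> nat) set" where
  "fast_Cauchy_codes d = {\<alpha>. \<forall>n m. n \<le> m \<longrightarrow> dist (d (\<alpha> n)) (d (\<alpha> m)) \<le> (1/2::real)^n}"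

lemma closed_fast_Cauchy_codes: "closed (fast_Cauchy_codes d)"
proof -
  have "fast_Cauchy_codes d =
      (\<Inter>n. \<Inter>m. {\<alpha>. (\<lambda>a b. n \<le> m \<longrightarrow> dist (d a) (d b) \<le> (1/2::real)^n) (\<alpha> n) (\<alpha> m)})"
    unfolding fast_Cauchy_codes_def by auto
  then show ?thesis
    by (simp only:) (intro closed_INT ballI closed_Collect_coordinates)
qed

lemma continuous_on_lim_fast_Cauchy_codes:
  fixes d :: "nat \<Rightarrow> 'a::complete_space"
  shows "continuous_on (fast_Cauchy_codes d) (\<lambda>\<alpha>. lim (\<lambda>n. d (\<alpha> n)))"
  unfolding continuous_on_topological
proof (intro ballI allI impI)
  let ?L = "\<lambda>\<alpha>. lim (\<lambda>n. d (\<alpha> n))"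
  have L_approx: "dist (d (\<alpha> n)) (?L \<alpha>) \<le> (1/2::real)^n" if "\<alpha> \<in> fast_Cauchy_codes d" for \<alpha> n
    using that unfolding fast_Cauchy_codes_def by (intro geometric_Cauchy_dist_lim) auto
  fix \<alpha> B assume \<alpha>: "\<alpha> \<in> fast_Cauchy_codes d" and "open B" "?L \<alpha> \<in> B"
  then obtain e where "e > 0" "ball (?L \<alpha>) e \<subseteq> B"
    by (meson openE)
  moreover obtain n where n: "(1/2::real)^n < e/2"
    using real_arch_pow_inv[of "e/2" "1/2"] \<open>e > 0\<close> by auto
  moreover have "open {\<beta>::nat \<Rightarrow> nat. \<beta> n \<in> {\<alpha> n}}"
    by (rule open_Collect_coordinate)
  moreover have "dist (?L \<alpha>) (?L \<beta>) < e" if "\<beta> \<in> fast_Cauchy_codes d" "\<beta> n = \<alpha> n" for \<beta>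
  proof -
    have "dist (?L \<alpha>) (?L \<beta>) \<le> dist (d (\<alpha> n)) (?L \<alpha>) + dist (d (\<beta> n)) (?L \<beta>)"
      using dist_triangle3[of "?L \<alpha>" "?L \<beta>" "d (\<alpha> n)"] that(2) by simp
    then show ?thesis
      using L_approx[OF \<alpha>, of n] L_approx[OF that(1), of n] n by linarith
  qed
  ultimately show "\<exists>A. open A \<and> \<alpha> \<in> A \<and> (\<forall>\<beta>\<in>fast_Cauchy_codes d. \<beta> \<in> A \<longrightarrow> ?L \<beta> \<in> B)"
    by (intro exI[of _ "{\<beta>. \<beta> n \<in> {\<alpha> n}}"]) auto
qed

lemma fast_Cauchy_code_tendsto:
  fixes d :: "nat \<Rightarrow> 'a::metric_space"
  assumes "\<And>U. open U \<Longrightarrow> U \<noteq> {} \<Longrightarrow> \<exists>i. d i \<in> U"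
  obtains \<alpha> where "\<alpha> \<in> fast_Cauchy_codes d" and "(\<lambda>n. d (\<alpha> n)) \<longlonglongrightarrow> x"
proof -
  have "\<exists>i. d i \<in> ball x ((1/2::real)^(Suc n))" for n
    by (rule assms) (simp_all add: not_le)
  then have "\<exists>i. dist (d i) x < (1/2::real)^(Suc n)" for n
    by (auto simp: dist_commute)
  then obtain \<alpha> where \<alpha>: "\<And>n. dist (d (\<alpha> n)) x < (1/2::real)^(Suc n)"
    using choice[of "\<lambda>n i. dist (d i) x < (1/2::real)^(Suc n)"] by blast
  show thesis
  proof
    show "\<alpha> \<in> fast_Cauchy_codes d"
      unfolding fast_Cauchy_codes_def
    proof (intro CollectI allI impI)
      fix n m :: nat assume "n \<le> m"
      have "(1/2::real)^(Suc m) \<le> (1/2)^(Suc n)"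
        using \<open>n \<le> m\<close> by (intro power_decreasing) auto
      moreover have "(1/2::real)^(Suc n) + (1/2)^(Suc n) = (1/2)^n"
        by simp
      ultimately show "dist (d (\<alpha> n)) (d (\<alpha> m)) \<le> (1/2::real)^n"
        using dist_triangle2[of "d (\<alpha> n)" "d (\<alpha> m)" x] \<alpha>[of n] \<alpha>[of m] by linarith
    qed
    have "(\<lambda>n. dist (d (\<alpha> n)) x) \<longlonglongrightarrow> 0"
    proof (rule Lim_null_comparison)
      show "\<forall>\<^sub>F n in sequentially. norm (dist (d (\<alpha> n)) x) \<le> (1/2::real)^(Suc n)"
        by (intro always_eventually allI) (use less_imp_le[OF \<alpha>] in simp)
      show "(\<lambda>n. (1/2::real)^(Suc n)) \<longlonglongrightarrow> 0"
        by (intro LIMSEQ_power_zero[THEN LIMSEQ_Suc]) auto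
    qed
    then show "(\<lambda>n. d (\<alpha> n)) \<longlonglongrightarrow> x"
      by (rule tendsto_dist_iff[THEN iffD2])
  qed
qed

lemma analytic_closed:
  fixes F :: "'b::{complete_space, second_countable_topology} set"
  assumes "closed F"
  shows "analytic F"
proof -
  obtain D :: "'b set" where "countable D" and D: "\<And>U. open U \<Longrightarrow> U \<noteq> {} \<Longrightarrow> \<exists>d\<in>D. d \<in> U"
    using countable_dense_exists by blast
  define d where "d = from_nat_into D"
  have dense: "\<exists>i. d i \<in> U" if "open U" "U \<noteq> {}" for U
    using D[OF that] from_nat_into_surj[OF \<open>countable D\<close>] unfolding d_def by blast
  define L where "L \<alpha> = lim (\<lambda>n. d (\<alpha> n))" for \<alpha>
  have L: "continuous_on (fast_Cauchy_codes d) L"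
    unfolding L_def by (rule continuous_on_lim_fast_Cauchy_codes)
  define C where "C = fast_Cauchy_codes d \<inter> L -` F"
  have "closed C"
    unfolding C_def by (rule continuous_closed_preimage[OF L closed_fast_Cauchy_codes assms])
  moreover have "continuous_on C L"
    using L by (rule continuous_on_subset) (auto simp: C_def)
  moreover have "L ` C = F"
  proof (intro equalityI subsetI)
    fix x assume "x \<in> F"
    obtain \<alpha> where "\<alpha> \<in> fast_Cauchy_codes d" and "(\<lambda>n. d (\<alpha> n)) \<longlonglongrightarrow> x"
      using fast_Cauchy_code_tendsto[of d x] dense by blast
    then have "\<alpha> \<in> C" "L \<alpha> = x"
      using \<open>x \<in> F\<close> by (auto simp: C_def L_def limI)
    then show "x \<in> L ` C"
      by blast
  qed (auto simp: C_def)
  ultimately show ?thesis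
    unfolding analytic_def by blast
qed

lemma analytic_open:
  fixes U :: "'b::{complete_space, second_countable_topology} set"
  assumes "open U"
  shows "analytic U"
proof -
  have "fsigma_in euclidean U"
    using assms by (simp add: open_imp_fsigma_in metrizable_space_euclidean)
  then obtain \<U> where "countable \<U>" "\<U> \<subseteq> Collect (closedin euclidean)" "\<Union>\<U> = U"
    unfolding fsigma_in_def union_of_def by blast
  moreover have closed: "closed F" if "F \<in> \<U>" for F
    using \<open>\<U> \<subseteq> _\<close> that unfolding closed_closedin by blast
  ultimately show ?thesis
    using analytic_Union[OF \<open>countable \<U>\<close> analytic_closed[OF closed]] by simp
qed

lemma analytic_borel:
  fixes S :: "'b::{complete_space, second_countable_topology} set"
  assumes "S \<in> sets borel"
  shows "analytic S"
proof -
  have "S \<in> sigma_sets UNIV {S. open S}"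
    using assms by (simp add: sets_borel)
  then have "analytic S \<and> analytic (UNIV - S)"
  proof induction
    case (Basic a)
    then show ?case
      by (auto intro: analytic_open analytic_closed)
  next
    case (Union A)
    have "analytic (\<Union>i. A i)"
      using Union by (intro analytic_UN) blast
    moreover have "analytic (\<Inter>i. UNIV - A i)"
      using Union by (intro analytic_INT) blast
    moreover have "UNIV - (\<Union>i. A i) = (\<Inter>i. UNIV - A i)"
      by blast
    ultimately show ?case
      by (simp only:)
  qed (auto simp: analytic_closed analytic_empty Diff_Diff_Int)
  then show ?thesis ..
qed

section \<open>Universal measurability of analytic sets\<close>

lemma INT_closure_image_bounded_prefix:
  fixes f :: "(nat \<Rightarrow> nat) \<Rightarrow> 'b::metric_space"
  assumes "closed C" "continuous_on C f"
  shows "(\<Inter>k. closure (f ` {\<alpha> \<in> C. \<forall>i<k. \<alpha> i \<le> b i})) \<subseteq> f ` (C \<inter> {\<alpha>. \<forall>i. \<alpha> i \<le> b i})"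
proof
  fix y assume y: "y \<in> (\<Inter>k. closure (f ` {\<alpha> \<in> C. \<forall>i<k. \<alpha> i \<le> b i}))"
  have "\<exists>\<alpha>. (\<alpha> \<in> C \<and> (\<forall>i<k. \<alpha> i \<le> b i)) \<and> dist (f \<alpha>) y < inverse (real (Suc k))" for k
    using y by (auto simp: closure_approachable)
  then obtain \<alpha> where "\<forall>k. (\<alpha> k \<in> C \<and> (\<forall>i<k. \<alpha> k i \<le> b i)) \<and> dist (f (\<alpha> k)) y < inverse (real (Suc k))"
    using choice[of "\<lambda>k \<alpha>. (\<alpha> \<in> C \<and> (\<forall>i<k. \<alpha> i \<le> b i)) \<and> dist (f \<alpha>) y < inverse (real (Suc k))"]
    by blast
  then have \<alpha>C: "\<And>k. \<alpha> k \<in> C" and \<alpha>b: "\<And>k i. i < k \<Longrightarrow> \<alpha> k i \<le> b i"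
    and \<alpha>y: "\<And>k. dist (f (\<alpha> k)) y < inverse (real (Suc k))"
    by auto
  \<comment> \<open>truncating at b does not change the coordinates below k and moves the sequence into a compact box\<close>
  define \<beta> where "\<beta> k i = min (\<alpha> k i) (b i)" for k i
  have "\<forall>k. \<beta> k \<in> {\<alpha>. \<forall>i. \<alpha> i \<le> b i}"
    by (simp add: \<beta>_def)
  from seq_compactE[OF compact_imp_seq_compact[OF compact_baire_box] this]
  obtain \<gamma> r where \<gamma>b: "\<forall>i. \<gamma> i \<le> b i" and r: "strict_mono r" and "(\<beta> \<circ> r) \<longlonglongrightarrow> \<gamma>"
    by blast
  have lim: "(\<lambda>j. \<alpha> (r j)) \<longlonglongrightarrow> \<gamma>"
    unfolding tendsto_baire_iff
  proof
    fix i
    have "eventually (\<lambda>j. \<beta> (r j) i = \<gamma> i) sequentially"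
      using \<open>(\<beta> \<circ> r) \<longlonglongrightarrow> \<gamma>\<close> by (simp add: tendsto_baire_iff)
    moreover have "eventually (\<lambda>j. i < r j) sequentially"
      using eventually_ge_at_top[of "Suc i"]
      by (rule eventually_mono) (use seq_suble[OF r] in \<open>auto intro: less_le_trans\<close>)
    ultimately show "eventually (\<lambda>j. \<alpha> (r j) i = \<gamma> i) sequentially"
      by eventually_elim (use \<alpha>b in \<open>auto simp: \<beta>_def min_def\<close>)
  qed
  have "\<gamma> \<in> C"
    using closed_sequentially[OF assms(1) _ lim] \<alpha>C by blast
  moreover have "(\<lambda>j. f (\<alpha> (r j))) \<longlonglongrightarrow> f \<gamma>"
    using continuous_on_tendsto_compose[OF assms(2) lim \<open>\<gamma> \<in> C\<close>] \<alpha>C by simp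
  moreover have "(\<lambda>j. f (\<alpha> (r j))) \<longlonglongrightarrow> y"
  proof (rule tendsto_dist_iff[THEN iffD2], rule Lim_null_comparison[OF _ LIMSEQ_inverse_real_of_nat])
    have "dist (f (\<alpha> (r j))) y \<le> inverse (real (Suc j))" for j
    proof -
      have "inverse (real (Suc (r j))) \<le> inverse (real (Suc j))"
        using seq_suble[OF r, of j] by (intro le_imp_inverse_le) auto
      then show ?thesis
        using \<alpha>y[of "r j"] by linarith
    qed
    then show "\<forall>\<^sub>F j in sequentially. norm (dist (f (\<alpha> (r j))) y) \<le> inverse (real (Suc j))"
      by simp
  qed
  ultimately have "y = f \<gamma>"
    using LIMSEQ_unique by blast
  then show "y \<in> f ` (C \<inter> {\<alpha>. \<forall>i. \<alpha> i \<le> b i})"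
    using \<open>\<gamma> \<in> C\<close> \<gamma>b by blast
qed

lemma outer_measure_of_image_bounded_prefix:
  assumes "space \<mu> = UNIV" and "t < outer_measure_of \<mu> (f ` C)"
  obtains b :: "nat \<Rightarrow> nat"
  where "\<And>k. t < outer_measure_of \<mu> (f ` {\<alpha> \<in> C. \<forall>i<k. \<alpha> i \<le> b i})"
proof -
  define Ck where "Ck b k = {\<alpha> \<in> C. \<forall>i<k. \<alpha> (i::nat) \<le> (b i::nat)}" for b k
  have step: "\<exists>m. t < outer_measure_of \<mu> (f ` Ck (b(k := m)) (Suc k))"
    if "t < outer_measure_of \<mu> (f ` Ck b k)" for b k
  proof -
    have "f ` Ck b k = (\<Union>m. f ` Ck (b(k := m)) (Suc k))"
      by (fastforce simp: Ck_def less_Suc_eq)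
    moreover have "incseq (\<lambda>m. f ` Ck (b(k := m)) (Suc k))"
      by (auto simp: incseq_def Ck_def less_Suc_eq intro!: image_mono)
    ultimately have "outer_measure_of \<mu> (f ` Ck b k) = (SUP m. outer_measure_of \<mu> (f ` Ck (b(k := m)) (Suc k)))"
      using assms(1) by (simp add: SUP_outer_measure_of_incseq)
    then show ?thesis
      using that by (simp add: less_SUP_iff)
  qed
  have "\<exists>bs. \<forall>k. t < outer_measure_of \<mu> (f ` Ck (bs k) k) \<and> (\<forall>i<k. bs (Suc k) i = bs k i)"
  proof (rule dependent_nat_choice)
    show "\<exists>b. t < outer_measure_of \<mu> (f ` Ck b 0)"
      using assms(2) by (simp add: Ck_def)
    show "\<exists>b'. t < outer_measure_of \<mu> (f ` Ck b' (Suc k)) \<and> (\<forall>i<k. b' i = b i)"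
      if "t < outer_measure_of \<mu> (f ` Ck b k)" for b k
      using step[OF that] by fastforce
  qed
  then obtain bs where bs: "\<And>k. t < outer_measure_of \<mu> (f ` Ck (bs k) k)"
    and bs_prefix: "\<And>k i. i < k \<Longrightarrow> bs (Suc k) i = bs k i"
    by blast
  define b where "b i = bs (Suc i) i" for i
  have "bs k i = b i" if "i < k" for i k
    using that
  proof (induction k)
    case (Suc k)
    show ?case
    proof (cases "i < k")
      case True
      then show ?thesis
        using Suc.IH bs_prefix[OF True] by simp
    next
      case False
      then show ?thesis
        using Suc.prems by (simp add: less_Suc_eq b_def)
    qed
  qed simp
  then have "Ck (bs k) k = Ck b k" for k
    by (auto simp: Ck_def)
  then show thesis
    using bs that[of b] by (simp add: Ck_def)
qed

lemma analytic_inner_compact: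
  fixes \<mu> :: "'b::metric_space measure"
  assumes sets_eq: "sets \<mu> = sets borel" and "finite_measure \<mu>"
    and "analytic P" and "t < outer_measure_of \<mu> P"
  shows "\<exists>K. compact K \<and> K \<subseteq> P \<and> t \<le> emeasure \<mu> K"
proof -
  interpret finite_measure \<mu> by fact
  have space: "space \<mu> = UNIV"
    using sets_eq_imp_space_eq[OF sets_eq] by simp
  obtain C and f :: "(nat \<Rightarrow> nat) \<Rightarrow> 'b" where C: "closed C" and f: "continuous_on C f" "f ` C = P"
    using \<open>analytic P\<close> unfolding analytic_def by blast
  obtain b where b: "\<And>k. t < outer_measure_of \<mu> (f ` {\<alpha> \<in> C. \<forall>i<k. \<alpha> i \<le> b i})"
    using outer_measure_of_image_bounded_prefix[OF space] assms(4) f(2) by blast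
  define CL where "CL k = closure (f ` {\<alpha> \<in> C. \<forall>i<k. \<alpha> i \<le> b i})" for k
  define K where "K = f ` (C \<inter> {\<alpha>. \<forall>i. \<alpha> i \<le> b i})"
  have "compact (C \<inter> {\<alpha>. \<forall>i. \<alpha> i \<le> b i})"
    using C compact_baire_box by (rule closed_Int_compact)
  moreover have "continuous_on (C \<inter> {\<alpha>. \<forall>i. \<alpha> i \<le> b i}) f"
    using f(1) by (rule continuous_on_subset) blast
  ultimately have "compact K"
    unfolding K_def by (rule compact_continuous_image[rotated])
  then have K_sets: "K \<in> sets \<mu>"
    by (simp add: sets_eq compact_imp_closed)
  have CL_sets: "CL k \<in> sets \<mu>" for k
    by (simp add: CL_def sets_eq)
  have t_CL: "t \<le> emeasure \<mu> (CL k)" for k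
  proof -
    have "outer_measure_of \<mu> (f ` {\<alpha> \<in> C. \<forall>i<k. \<alpha> i \<le> b i}) \<le> outer_measure_of \<mu> (CL k)"
      unfolding CL_def by (rule outer_measure_of_mono[OF closure_subset])
    also have "\<dots> = emeasure \<mu> (CL k)"
      using CL_sets by simp
    finally show ?thesis
      using b[of k] by simp
  qed
  have "decseq CL"
    unfolding CL_def by (intro decseq_SucI closure_mono image_mono) auto
  then have "(INF k. emeasure \<mu> (CL k)) = emeasure \<mu> (\<Inter>k. CL k)"
    using CL_sets by (intro INF_emeasure_decseq) auto
  moreover have "t \<le> (INF k. emeasure \<mu> (CL k))"
    using t_CL by (rule INF_greatest)
  ultimately have "t \<le> emeasure \<mu> (\<Inter>k. CL k)"
    by simp
  also have "\<dots> \<le> emeasure \<mu> K"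
    using INT_closure_image_bounded_prefix[OF C f(1), of b]
    by (intro emeasure_mono[OF _ K_sets]) (simp add: CL_def K_def)
  finally have "t \<le> emeasure \<mu> K" .
  moreover have "K \<subseteq> P"
    using f(2) by (auto simp: K_def)
  ultimately show ?thesis
    using \<open>compact K\<close> by blast
qed

lemma analytic_sets_completion:
  fixes \<mu> :: "'b::metric_space measure"
  assumes sets_eq: "sets \<mu> = sets borel" and "finite_measure \<mu>" and "analytic P"
  shows "P \<in> sets (completion \<mu>)"
proof -
  interpret finite_measure \<mu> by fact
  have space: "space \<mu> = UNIV"
    using sets_eq_imp_space_eq[OF sets_eq] by simp
  obtain H where H: "H \<in> sets \<mu>" "P \<subseteq> H" "outer_measure_of \<mu> P = emeasure \<mu> H"
    using outer_measure_of_attain[of P \<mu>] space by blast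
  \<comment> \<open>the inner measure of P by compact sets is attained along a sequence\<close>
  obtain m where "incseq m" and m: "range m \<subseteq> emeasure \<mu> ` {K. compact K \<and> K \<subseteq> P}"
    and m_SUP: "Sup (emeasure \<mu> ` {K. compact K \<and> K \<subseteq> P}) = (SUP i. m i)"
    using ennreal_Sup_countable_SUP[of "emeasure \<mu> ` {K. compact K \<and> K \<subseteq> P}"] by blast
  have "\<forall>i. \<exists>K. (compact K \<and> K \<subseteq> P) \<and> m i = emeasure \<mu> K"
    using m by blast
  then obtain K where K: "\<And>i. compact (K i)" "\<And>i. K i \<subseteq> P" "\<And>i. m i = emeasure \<mu> (K i)"
    using choice[of "\<lambda>i K. (compact K \<and> K \<subseteq> P) \<and> m i = emeasure \<mu> K"] by blast
  define L where "L = (\<Union>i. K i)"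
  have L: "L \<in> sets \<mu>" "L \<subseteq> P"
    using K by (auto simp: L_def sets_eq compact_imp_closed)
  have "emeasure \<mu> H \<le> emeasure \<mu> L"
  proof (rule dense_le)
    fix t assume "t < emeasure \<mu> H"
    then obtain K' where "compact K'" "K' \<subseteq> P" "t \<le> emeasure \<mu> K'"
      using analytic_inner_compact[OF sets_eq \<open>finite_measure \<mu>\<close> \<open>analytic P\<close>] H(3) by auto
    then have "t \<le> Sup (emeasure \<mu> ` {K. compact K \<and> K \<subseteq> P})"
      by (auto intro: Sup_upper2)
    also have "\<dots> = (SUP i. m i)"
      by (rule m_SUP)
    also have "\<dots> \<le> emeasure \<mu> L"
      using K L by (auto intro!: SUP_least emeasure_mono simp: L_def sets_eq compact_imp_closed)
    finally show "t \<le> emeasure \<mu> L" .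
  qed
  moreover have "emeasure \<mu> (H - L) = emeasure \<mu> H - emeasure \<mu> L"
    using H L by (intro emeasure_Diff) auto
  ultimately have "H - L \<in> null_sets \<mu>"
    using H L by (auto simp: null_sets_def diff_eq_0_iff_ennreal less_top[symmetric])
  moreover have "P = L \<union> (P - L)"
    using L by blast
  ultimately show ?thesis
    using H(2) L(1) by (intro sets_completionI[of P L "P - L" "H - L"]) auto
qed

section \<open>Neighbourhoods in a Borel graph\<close>

definition neighbourhood :: "('a \<Rightarrow> 'a \<Rightarrow> bool) \<Rightarrow> 'a set \<Rightarrow> 'a set" where
  "neighbourhood G S = {x. \<exists>y\<in>S. G x y}"

lemma analytic_neighbourhood:
  fixes G :: "'a::polish_space \<Rightarrow> 'a \<Rightarrow> bool"
  assumes "{p. G (fst p) (snd p)} \<in> sets borel" and "S \<in> sets borel"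
  shows "analytic (neighbourhood G S)"
proof -
  have "(UNIV :: 'a set) \<times> S \<in> sets (borel \<Otimes>\<^sub>M borel)"
    using assms(2) by (intro pair_measureI) auto
  then have "(UNIV :: 'a set) \<times> S \<in> sets borel"
    by (simp only: borel_prod)
  then have "{p. G (fst p) (snd p)} \<inter> (UNIV \<times> S) \<in> sets borel"
    by (rule sets.Int[OF assms(1)])
  then have "analytic (fst ` ({p. G (fst p) (snd p)} \<inter> (UNIV \<times> S)))"
    by (intro analytic_continuous_image continuous_on_fst continuous_on_id analytic_borel)
  moreover have "fst ` ({p. G (fst p) (snd p)} \<inter> (UNIV \<times> S)) = neighbourhood G S"
    by (force simp: neighbourhood_def)
  ultimately show ?thesis
    by simp
qed

lemma neighbourhood_main_part:
  fixes \<mu> :: "'a::polish_space measure"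
  assumes sets_eq: "sets \<mu> = sets borel" and "finite_measure \<mu>"
    and "{p. G (fst p) (snd p)} \<in> sets borel" and "S \<in> sets borel"
  shows "main_part \<mu> (neighbourhood G S) \<in> sets borel"
    and "AE x in \<mu>. x \<in> main_part \<mu> (neighbourhood G S) \<longleftrightarrow> x \<in> neighbourhood G S"
proof -
  have "neighbourhood G S \<in> sets (completion \<mu>)"
    using assms by (intro analytic_sets_completion analytic_neighbourhood)
  then show "main_part \<mu> (neighbourhood G S) \<in> sets borel"
    and "AE x in \<mu>. x \<in> main_part \<mu> (neighbourhood G S) \<longleftrightarrow> x \<in> neighbourhood G S"
    by (auto simp flip: sets_eq intro: AE_in_main_part)
qed

lemma countable_basis_sequence:
  obtains U :: "nat \<Rightarrow> 'a::second_countable_topology set"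
  where "\<And>i. open (U i)" and "\<And>x V. open V \<Longrightarrow> x \<in> V \<Longrightarrow> \<exists>i. x \<in> U i \<and> U i \<subseteq> V"
proof -
  obtain \<B> :: "'a set set" where "countable \<B>" and \<B>: "topological_basis \<B>"
    using ex_countable_basis by blast
  have "\<B> \<noteq> {}"
    using topological_basisE[OF \<B> open_UNIV UNIV_I[of undefined]] by blast
  show thesis
  proof (rule that[of "from_nat_into \<B>"])
    show "open (from_nat_into \<B> i)" for i
      using \<B> from_nat_into[OF \<open>\<B> \<noteq> {}\<close>] by (rule topological_basis_open)
    show "\<exists>i. x \<in> from_nat_into \<B> i \<and> from_nat_into \<B> i \<subseteq> V" if V: "open V" "x \<in> V" for x V
    proof -
      obtain B where "B \<in> \<B>" "x \<in> B" "B \<subseteq> V"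
        using topological_basisE[OF \<B> V] by blast
      moreover obtain i where "from_nat_into \<B> i = B"
        using from_nat_into_surj[OF \<open>countable \<B>\<close> \<open>B \<in> \<B>\<close>] by blast
      ultimately show ?thesis
        by blast
    qed
  qed
qed

lemma ae_countable_borel_coloring:
  fixes \<mu> :: "'a::{second_countable_topology, t1_space} measure"
  assumes sets_eq: "sets \<mu> = sets borel"
    and NB: "\<And>S. S \<in> sets borel \<Longrightarrow> NB S \<in> sets borel"
    and NB_ae: "\<And>S. S \<in> sets borel \<Longrightarrow> AE x in \<mu>. x \<in> NB S \<longleftrightarrow> x \<in> neighbourhood G S"
    and irrefl: "\<And>x. \<not> G x x" and fin: "\<And>x. finite {y. G x y}"
  obtains c :: "'a \<Rightarrow> nat" and Z
  where "c \<in> borel \<rightarrow>\<^sub>M count_space UNIV" and "Z \<in> null_sets \<mu>"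
    and "\<And>x y. x \<notin> Z \<Longrightarrow> y \<notin> Z \<Longrightarrow> G x y \<Longrightarrow> c x \<noteq> c y"
proof -
  have space: "space \<mu> = UNIV"
    using sets_eq_imp_space_eq[OF sets_eq] by simp
  obtain U :: "nat \<Rightarrow> 'a set" where U_open: "\<And>i. open (U i)"
    and U_basis: "\<And>x V. open V \<Longrightarrow> x \<in> V \<Longrightarrow> \<exists>i. x \<in> U i \<and> U i \<subseteq> V"
    by (rule countable_basis_sequence) blast
  have "AE x in \<mu>. \<forall>i. x \<in> NB (U i) \<longleftrightarrow> x \<in> neighbourhood G (U i)"
    using NB_ae U_open by (simp add: AE_all_countable)
  then obtain Z where good_ae: "\<And>x. x \<in> space \<mu> - Z \<Longrightarrow> \<forall>i. x \<in> NB (U i) \<longleftrightarrow> x \<in> neighbourhood G (U i)"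
    and Z: "Z \<in> null_sets \<mu>"
    by (rule AE_E3) blast
  have good: "x \<in> NB (U i) \<longleftrightarrow> x \<in> neighbourhood G (U i)" if "x \<notin> Z" for x i
    using good_ae[of x] that by (simp add: space)
  define W where "W i = U i - NB (U i)" for i
  define c where "c x = (LEAST i. x \<in> W i)" for x
  \<comment> \<open>a basic open set around x avoiding the finitely many neighbours of x\<close>
  have cover: "\<exists>i. x \<in> W i" if "x \<notin> Z" for x
  proof -
    have "open (- {y. G x y})"
      using fin[of x] by (simp add: finite_imp_closed open_Compl)
    then obtain i where "x \<in> U i" "U i \<subseteq> - {y. G x y}"
      using U_basis irrefl by blast
    then show ?thesis
      using good[OF that, of i] by (auto simp: W_def neighbourhood_def)
  qed
  have independent: "\<not> G x y" if "x \<notin> Z" "x \<in> W i" "y \<in> W i" for x y i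
    using good[OF that(1), of i] that(2,3) by (auto simp: W_def neighbourhood_def)
  show thesis
  proof
    have "W i \<in> sets borel" for i
      using U_open NB by (simp add: W_def sets.Diff)
    then show "c \<in> borel \<rightarrow>\<^sub>M count_space UNIV"
      unfolding c_def by (intro measurable_Least) (simp add: pred_def)
    show "Z \<in> null_sets \<mu>"
      by (fact Z)
    fix x y assume "x \<notin> Z" "y \<notin> Z" "G x y"
    then show "c x \<noteq> c y"
      using LeastI_ex[OF cover] independent unfolding c_def by metis
  qed
qed

section \<open>Greedy colourings modulo null sets\<close>

text \<open>Points of D are coloured in the order given by st, each with the least colour not
  used by its earlier neighbours, where NB S stands in for the neighbourhood of S (they
  agree up to a null set); greedy_class D st NB t l is the set of points x with st x < t
  that receive colour l.\<close>

primrec greedy_class :: "'a set \<Rightarrow> ('a \<Rightarrow> nat) \<Rightarrow> ('a set \<Rightarrow> 'a set) \<Rightarrow> nat \<Rightarrow> nat \<Rightarrow> 'a set"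
where
  "greedy_class D st NB 0 l = {}"
| "greedy_class D st NB (Suc t) l = greedy_class D st NB t l \<union>
     {x \<in> D. st x = t \<and> x \<notin> NB (greedy_class D st NB t l)
       \<and> (\<forall>l'<l. x \<in> NB (greedy_class D st NB t l'))}"

lemma mem_greedy_class:
  "x \<in> greedy_class D st NB t l \<longleftrightarrow>
    x \<in> D \<and> st x < t \<and> x \<notin> NB (greedy_class D st NB (st x) l)
      \<and> (\<forall>l'<l. x \<in> NB (greedy_class D st NB (st x) l'))"
proof (induction t arbitrary: l)
  case (Suc t)
  then show ?case
    by (cases "st x < t") (auto simp: less_Suc_eq)
qed simp

lemma greedy_class_unique:
  assumes "x \<in> greedy_class D st NB t l" and "x \<in> greedy_class D st NB t' l'"
  shows "l = l'"
  using assms by (auto simp: mem_greedy_class dest: not_less_iff_gr_or_eq[THEN iffD1])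

lemma greedy_class_borel:
  fixes st :: "'a::topological_space \<Rightarrow> nat"
  assumes NB: "\<And>S. S \<in> sets borel \<Longrightarrow> NB S \<in> sets borel"
    and "D \<in> sets borel" and st: "st \<in> borel \<rightarrow>\<^sub>M count_space UNIV"
  shows "greedy_class D st NB t l \<in> sets borel"
proof (induction t arbitrary: l)
  case (Suc t)
  have "st -` {t} \<in> sets borel"
    using measurable_sets[OF st, of "{t}"] by simp
  moreover have "(\<Union>l'\<in>{..<l}. UNIV - NB (greedy_class D st NB t l')) \<in> sets borel"
    using NB Suc by (intro sets.finite_UN) auto
  moreover have "{x \<in> D. st x = t \<and> x \<notin> NB (greedy_class D st NB t l)
       \<and> (\<forall>l'<l. x \<in> NB (greedy_class D st NB t l'))} =
     D \<inter> st -` {t} \<inter> (UNIV - NB (greedy_class D st NB t l))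
       \<inter> (UNIV - (\<Union>l'\<in>{..<l}. UNIV - NB (greedy_class D st NB t l')))"
    by auto
  ultimately show ?case
    using Suc NB \<open>D \<in> sets borel\<close> by (simp del: vimage_eq)
qed simp

lemma greedy_class_exhausts:
  fixes st :: "'a \<Rightarrow> nat"
  assumes "x \<in> D" and "finite {y. G x y}" and "card {y \<in> D. G x y \<and> st y < st x} \<le> M"
    and NB_x: "\<And>l. x \<in> NB (greedy_class D st NB (st x) l)
      \<longleftrightarrow> x \<in> neighbourhood G (greedy_class D st NB (st x) l)"
  shows "\<exists>l\<le>M. x \<in> greedy_class D st NB (Suc (st x)) l"
proof -
  let ?gc = "greedy_class D st NB (st x)"
  have "\<exists>l. l \<le> M \<and> x \<notin> NB (?gc l)"
  proof (rule ccontr)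
    assume "\<nexists>l. l \<le> M \<and> x \<notin> NB (?gc l)"
    then have "\<forall>l\<in>{..M}. \<exists>y. y \<in> ?gc l \<and> G x y"
      using NB_x by (auto simp: neighbourhood_def)
    then obtain y where y: "\<And>l. l \<in> {..M} \<Longrightarrow> y l \<in> ?gc l \<and> G x (y l)"
      by metis
    \<comment> \<open>the colours 0..M are all taken by distinct earlier neighbours of x\<close>
    have "inj_on y {..M}"
      using y greedy_class_unique by (metis inj_onI)
    moreover have "y ` {..M} \<subseteq> {y \<in> D. G x y \<and> st y < st x}"
      using y by (auto simp: mem_greedy_class)
    moreover have "finite {y \<in> D. G x y \<and> st y < st x}"
      using assms(2) by (rule finite_subset[rotated]) auto
    ultimately have "card {..M} \<le> card {y \<in> D. G x y \<and> st y < st x}"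
      by (rule card_inj_on_le)
    then show False
      using assms(3) by simp
  qed
  then obtain l where "l \<le> M" "x \<notin> NB (?gc l)" "\<forall>l'<l. x \<in> NB (?gc l')"
    unfolding exists_least_iff[of "\<lambda>l. l \<le> M \<and> x \<notin> NB (?gc l)"] by auto
  then show ?thesis
    using \<open>x \<in> D\<close> by (auto simp: mem_greedy_class)
qed

lemma greedy_class_no_edge:
  fixes st :: "'a \<Rightarrow> nat"
  assumes "x \<in> greedy_class D st NB (Suc (st x)) l" and "y \<in> greedy_class D st NB (Suc (st y)) l"
    and "st y < st x"
    and "x \<in> NB (greedy_class D st NB (st x) l) \<longleftrightarrow> x \<in> neighbourhood G (greedy_class D st NB (st x) l)"
  shows "\<not> G x y"
proof -
  have "y \<in> greedy_class D st NB (st x) l" and "x \<notin> NB (greedy_class D st NB (st x) l)"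
    using assms(1-3) by (auto simp: mem_greedy_class)
  then show ?thesis
    using assms(4) by (auto simp: neighbourhood_def)
qed

lemma greedy_coloring:
  fixes \<mu> :: "'a::topological_space measure" and st :: "'a \<Rightarrow> nat"
  assumes sets_eq: "sets \<mu> = sets borel"
    and NB: "\<And>S. S \<in> sets borel \<Longrightarrow> NB S \<in> sets borel"
    and NB_ae: "\<And>S. S \<in> sets borel \<Longrightarrow> AE x in \<mu>. x \<in> NB S \<longleftrightarrow> x \<in> neighbourhood G S"
    and sym: "\<And>x y. G x y \<Longrightarrow> G y x" and fin: "\<And>x. finite {y. G x y}"
    and D: "D \<in> sets borel" and st: "st \<in> borel \<rightarrow>\<^sub>M count_space UNIV"
    and st_proper: "\<And>x y. x \<in> D \<Longrightarrow> y \<in> D \<Longrightarrow> G x y \<Longrightarrow> st x \<noteq> st y"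
    and deg: "\<And>x. x \<in> D \<Longrightarrow> card {y \<in> D. G x y \<and> st y < st x} \<le> M"
  obtains Z where "Z \<in> null_sets \<mu>" and "measurable_proper_coloring_on \<mu> G (D - Z) (Suc M)"
proof -
  let ?gc = "greedy_class D st NB"
  have space: "space \<mu> = UNIV"
    using sets_eq_imp_space_eq[OF sets_eq] by simp
  have gc_borel: "?gc t l \<in> sets borel" for t l
    using NB D st by (rule greedy_class_borel)
  have "AE x in \<mu>. \<forall>t l. x \<in> NB (?gc t l) \<longleftrightarrow> x \<in> neighbourhood G (?gc t l)"
    using NB_ae[OF gc_borel] by (simp add: AE_all_countable)
  then obtain Z where good_ae: "\<And>x. x \<in> space \<mu> - Z \<Longrightarrow> \<forall>t l. x \<in> NB (?gc t l) \<longleftrightarrow> x \<in> neighbourhood G (?gc t l)"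
    and Z: "Z \<in> null_sets \<mu>"
    by (rule AE_E3) blast
  have good: "x \<in> NB (?gc t l) \<longleftrightarrow> x \<in> neighbourhood G (?gc t l)" if "x \<notin> Z" for x t l
    using good_ae[of x] that by (simp add: space)
  define c where "c x = (LEAST l. \<exists>t. x \<in> ?gc t l)" for x
  have c_eq: "c x = l" if "x \<in> ?gc t l" for x t l
    unfolding c_def using that by (intro Least_equality) (auto dest: greedy_class_unique)
  have coloured: "\<exists>l\<le>M. x \<in> ?gc (Suc (st x)) l" if "x \<in> D - Z" for x
    using that fin deg good by (intro greedy_class_exhausts) auto
  have "Measurable.pred borel (\<lambda>x. x \<in> ?gc t l)" for t l
    using gc_borel by (simp add: pred_def)
  then have "c \<in> borel \<rightarrow>\<^sub>M count_space UNIV"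
    unfolding c_def by (intro measurable_Least pred_intros_countable)
  then have "c \<in> completion \<mu> \<rightarrow>\<^sub>M count_space UNIV"
    by (intro measurable_completion) (simp add: measurable_def sets_eq space)
  moreover have "c x < Suc M" if "x \<in> D - Z" for x
    using coloured[OF that] c_eq by fastforce
  moreover have "c x \<noteq> c y" if xy: "x \<in> D - Z" "y \<in> D - Z" "G x y" for x y
  proof
    assume "c x = c y"
    obtain l where x: "x \<in> ?gc (Suc (st x)) l" and y: "y \<in> ?gc (Suc (st y)) l"
      using coloured[OF xy(1)] coloured[OF xy(2)] c_eq \<open>c x = c y\<close> by metis
    have "st y < st x \<or> st x < st y"
      using xy st_proper by fastforce
    then show False
    proof
      assume "st y < st x"
      then show False
        using greedy_class_no_edge[OF x y] good xy by blast
    next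
      assume "st x < st y"
      then show False
        using greedy_class_no_edge[OF y x] good xy sym by blast
    qed
  qed
  ultimately show thesis
    using that[OF Z] unfolding measurable_proper_coloring_on_def by blast
qed

section \<open>Colouring along the stages\<close>

definition stage :: "(nat \<Rightarrow> 'a set) \<Rightarrow> 'a \<Rightarrow> nat" where
  "stage A x = (LEAST k. x \<in> A k)"

lemma stage_eq:
  assumes "disjoint_family A" and "x \<in> A k"
  shows "stage A x = k"
proof -
  have unique: "j = k" if "x \<in> A j" for j
    using disjoint_family_onD[OF assms(1), of j k] assms(2) that by auto
  show ?thesis
    unfolding stage_def
  proof (rule Least_equality)
    show "k \<le> j" if "x \<in> A j" for j
      using unique[OF that] by simp
  qed (fact assms(2))
qed

lemma card_neighbours_in_later_stages_le:
  fixes A :: "nat \<Rightarrow> 'a set"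
  assumes "disjoint_family A" and "x \<in> A k" and "finite {y. G x y}"
    and "induced_degree G (X - (\<Union>j<k. A j)) x \<le> M"
    and "S \<subseteq> X" and later: "\<And>y. y \<in> S \<Longrightarrow> \<exists>j\<ge>k. y \<in> A j"
  shows "card {y \<in> S. G x y} \<le> M"
proof -
  have "y \<notin> A j" if "y \<in> S" "j < k" for y j
  proof
    assume "y \<in> A j"
    obtain j' where "k \<le> j'" "y \<in> A j'"
      using later[OF \<open>y \<in> S\<close>] by blast
    then show False
      using stage_eq[OF assms(1) \<open>y \<in> A j\<close>] stage_eq[OF assms(1) \<open>y \<in> A j'\<close>] \<open>j < k\<close> by simp
  qed
  then have "{y \<in> S. G x y} \<subseteq> {y \<in> X - (\<Union>j<k. A j). G x y}"
    using \<open>S \<subseteq> X\<close> by blast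
  moreover have "finite {y \<in> X - (\<Union>j<k. A j). G x y}"
    using assms(3) by (rule finite_subset[rotated]) auto
  ultimately have "card {y \<in> S. G x y} \<le> induced_degree G (X - (\<Union>j<k. A j)) x"
    unfolding induced_degree_def by (rule card_mono[rotated])
  then show ?thesis
    using assms(4) by simp
qed

lemma stagewise_coloring:
  fixes \<mu> :: "'a::topological_space measure" and A :: "nat \<Rightarrow> 'a set"
    and c :: "'a \<Rightarrow> nat" and n :: nat
  assumes sets_eq: "sets \<mu> = sets borel"
    and NB: "\<And>S. S \<in> sets borel \<Longrightarrow> NB S \<in> sets borel"
    and NB_ae: "\<And>S. S \<in> sets borel \<Longrightarrow> AE x in \<mu>. x \<in> NB S \<longleftrightarrow> x \<in> neighbourhood G S"
    and sym: "\<And>x y. G x y \<Longrightarrow> G y x" and fin: "\<And>x. finite {y. G x y}"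
    and A: "\<And>k. A k \<in> sets \<mu>" and disj: "disjoint_family A"
    and deg: "\<And>k x. x \<in> A k \<Longrightarrow> induced_degree G (space \<mu> - (\<Union>j<k. A j)) x \<le> M"
    and c: "c \<in> borel \<rightarrow>\<^sub>M count_space UNIV" and Z0: "Z0 \<in> null_sets \<mu>"
    and c_proper: "\<And>x y. x \<notin> Z0 \<Longrightarrow> y \<notin> Z0 \<Longrightarrow> G x y \<Longrightarrow> c x \<noteq> c y"
  obtains Z where "Z \<in> null_sets \<mu>"
    and "measurable_proper_coloring_on \<mu> G ((\<Union>k\<le>n. A k) \<inter> {x. c x < n} - Z) (Suc M)"
proof -
  have space: "space \<mu> = UNIV"
    using sets_eq_imp_space_eq[OF sets_eq] by simp
  define D where "D = (\<Union>k\<le>n. A k) \<inter> {x. c x < n} - Z0"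
  have D: "D \<in> sets borel" "D \<subseteq> (\<Union>k\<le>n. A k) \<inter> {x. c x < n}"
    using A c Z0 by (auto simp: D_def sets_eq)
  \<comment> \<open>later stages are coloured first, each stage in the order given by c\<close>
  define st where "st x = (n - stage A x) * n + c x" for x
  have stage: "stage A x \<le> n" "x \<in> A (stage A x)" if x: "x \<in> D" for x
  proof -
    obtain k where "k \<le> n" "x \<in> A k"
      using D(2) x by blast
    then show "stage A x \<le> n" "x \<in> A (stage A x)"
      using stage_eq[OF disj] by auto
  qed
  have st_div: "st x div n = n - stage A x" and st_mod: "st x mod n = c x" if "x \<in> D" for x
    using D(2) that by (auto simp: st_def)
  have stage_meas: "stage A \<in> borel \<rightarrow>\<^sub>M count_space UNIV"
    unfolding stage_def using A by (intro measurable_Least) (simp add: pred_def sets_eq)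
  have "(\<lambda>x. (n - k) * n + c x) \<in> borel \<rightarrow>\<^sub>M count_space UNIV" for k
    by (rule measurable_compose_countable[OF _ c]) simp
  then have "st \<in> borel \<rightarrow>\<^sub>M count_space UNIV"
    unfolding st_def by (rule measurable_compose_countable[OF _ stage_meas])
  moreover have "st x \<noteq> st y" if "x \<in> D" "y \<in> D" "G x y" for x y
    using st_mod[OF that(1)] st_mod[OF that(2)] c_proper[of x y] that by (auto simp: D_def)
  moreover have "card {y \<in> D. G x y \<and> st y < st x} \<le> M" if "x \<in> D" for x
  proof -
    have later: "\<exists>j\<ge>stage A x. y \<in> A j" if "y \<in> {y \<in> D. st y < st x}" for y
    proof -
      have "n - stage A y \<le> n - stage A x"
        using div_le_mono[of "st y" "st x" n] st_div[of x] st_div[of y] that \<open>x \<in> D\<close> by simp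
      then show ?thesis
        using stage[of x] stage[of y] that \<open>x \<in> D\<close> by (intro exI[of _ "stage A y"]) auto
    qed
    have "card {y \<in> {y \<in> D. st y < st x}. G x y} \<le> M"
      by (rule card_neighbours_in_later_stages_le[OF disj _ fin _ _ later, where X = UNIV])
        (use stage[OF that] deg[of x "stage A x"] space in auto)
    moreover have "{y \<in> {y \<in> D. st y < st x}. G x y} = {y \<in> D. G x y \<and> st y < st x}"
      by blast
    ultimately show ?thesis
      by simp
  qed
  ultimately obtain Z where "Z \<in> null_sets \<mu>" "measurable_proper_coloring_on \<mu> G (D - Z) (Suc M)"
    using greedy_coloring[OF sets_eq NB NB_ae sym fin D(1)] by blast
  moreover have "D - Z = (\<Union>k\<le>n. A k) \<inter> {x. c x < n} - (Z0 \<union> Z)"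
    by (auto simp: D_def)
  ultimately show thesis
    using that[of "Z0 \<union> Z"] Z0 by auto
qed

lemma (in prob_space) prob_UN_eq_1_of_geometric_decay:
  fixes A :: "nat \<Rightarrow> 'a set" and r :: real
  assumes A: "\<And>n. A n \<in> events" and r: "0 \<le> r" "r < 1"
    and decay: "\<And>n. prob (space M - (\<Union>k\<le>n. A k)) \<le> r * prob (space M - (\<Union>k<n. A k))"
  shows "prob (\<Union>n. A n) = 1"
proof -
  have bound: "prob (space M - (\<Union>k\<le>n. A k)) \<le> r ^ Suc n" for n
  proof (induction n)
    case 0
    then show ?case
      using decay[of 0] by (simp add: prob_space)
  next
    case (Suc n)
    have "prob (space M - (\<Union>k\<le>Suc n. A k)) \<le> r * prob (space M - (\<Union>k\<le>n. A k))"
      using decay[of "Suc n"] by (simp add: lessThan_Suc_atMost)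
    also have "\<dots> \<le> r * r ^ Suc n"
      using Suc r(1) by (rule mult_left_mono)
    finally show ?case
      by simp
  qed
  have "prob (space M - (\<Union>n. A n)) \<le> prob (space M - (\<Union>k\<le>n. A k))" for n
    by (rule finite_measure_mono) (use A in auto)
  then have "prob (space M - (\<Union>n. A n)) \<le> r ^ Suc n" for n
    by (rule order_trans[OF _ bound])
  moreover have "(\<lambda>n. r ^ Suc n) \<longlonglongrightarrow> 0"
    using r by (intro LIMSEQ_power_zero[THEN LIMSEQ_Suc]) auto
  ultimately have "prob (space M - (\<Union>n. A n)) \<le> 0"
    by (intro LIMSEQ_le_const) auto
  then have "1 \<le> prob (\<Union>n. A n)"
    using prob_compl[of "\<Union>n. A n"] A by auto
  then show ?thesis
    using prob_le_1[of "\<Union>n. A n"] by linarith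
qed

lemma (in finite_measure) measure_truncation_gt:
  fixes A :: "nat \<Rightarrow> 'a set" and c :: "'a \<Rightarrow> nat"
  assumes A: "\<And>k. A k \<in> sets M" and c: "c \<in> M \<rightarrow>\<^sub>M count_space UNIV"
    and "t < measure M (\<Union>k. A k)"
  shows "\<exists>n. t < measure M ((\<Union>k\<le>n. A k) \<inter> {x \<in> space M. c x < n})"
proof -
  define E where "E n = (\<Union>k\<le>n. A k) \<inter> {x \<in> space M. c x < n}" for n
  have "range E \<subseteq> sets M"
    using A c by (auto simp: E_def)
  moreover have "incseq E"
    by (auto simp: incseq_def E_def intro: order.trans)
  moreover have "(\<Union>n. E n) = (\<Union>k. A k)"
  proof (intro equalityI subsetI)
    fix x assume "x \<in> (\<Union>k. A k)"
    then obtain k where "x \<in> A k"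
      by blast
    then have "x \<in> E (max k (Suc (c x)))"
      using sets.sets_into_space[OF A] by (auto simp: E_def)
    then show "x \<in> (\<Union>n. E n)"
      by blast
  qed (auto simp: E_def)
  ultimately have "(\<lambda>n. measure M (E n)) \<longlonglongrightarrow> measure M (\<Union>k. A k)"
    by (metis finite_Lim_measure_incseq)
  then have "eventually (\<lambda>n. t < measure M (E n)) sequentially"
    using assms(3) by (rule order_tendstoD)
  then show ?thesis
    by (auto simp: E_def eventually_sequentially)
qed

theorem lemma5p2:
  fixes \<mu> :: "'a::polish_space measure"
    and G :: "'a \<Rightarrow> 'a \<Rightarrow> bool"
    and M :: nat and r :: real
    and A :: "nat \<Rightarrow> 'a set"
  assumes "standard_prob_space \<mu>"
    and "borel_graph \<mu> G"
    and "locally_finite_graph G"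
    and "M > 0"
    and "0 < r" and "r < 1"
    and "\<And>n. A n \<in> sets \<mu>"
    and "disjoint_family A"
    and "\<And>n. measure \<mu> (space \<mu> - (\<Union>k\<le>n. A k))
               \<le> r * measure \<mu> (space \<mu> - (\<Union>k<n. A k))"
    and "\<And>n x. x \<in> A n \<Longrightarrow> induced_degree G (space \<mu> - (\<Union>k<n. A k)) x \<le> M"
  shows "chi_ap \<mu> G \<le> enat (M + 1)"
proof -
  have sets_eq: "sets \<mu> = sets borel" and "prob_space \<mu>"
    using assms(1) by (auto simp: standard_prob_space_def)
  interpret prob_space \<mu> by fact
  have space: "space \<mu> = UNIV"
    using sets_eq_imp_space_eq[OF sets_eq] by simp
  have sym: "\<And>x y. G x y \<Longrightarrow> G y x" and irrefl: "\<And>x. \<not> G x x"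
    and edges: "{p. G (fst p) (snd p)} \<in> sets borel"
    using assms(2) by (auto simp: borel_graph_def)
  have fin: "\<And>x. finite {y. G x y}"
    using assms(3) unfolding locally_finite_graph_def by blast
  define NB where "NB S = main_part \<mu> (neighbourhood G S)" for S
  note NB = neighbourhood_main_part[OF sets_eq finite_measure_axioms edges, folded NB_def]
  obtain c :: "'a \<Rightarrow> nat" and Z0 where c: "c \<in> borel \<rightarrow>\<^sub>M count_space UNIV" and Z0: "Z0 \<in> null_sets \<mu>"
    and c_proper: "\<And>x y. x \<notin> Z0 \<Longrightarrow> y \<notin> Z0 \<Longrightarrow> G x y \<Longrightarrow> c x \<noteq> c y"
    using ae_countable_borel_coloring[OF sets_eq NB irrefl fin] by blast
  have "approx_colorable \<mu> G (Suc M)"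
    unfolding approx_colorable_def
  proof (intro allI impI)
    fix \<epsilon> :: real assume "0 < \<epsilon>"
    have "prob (\<Union>n. A n) = 1"
      using assms(5-7,9) by (intro prob_UN_eq_1_of_geometric_decay) auto
    then obtain n where n: "1 - \<epsilon> < prob ((\<Union>k\<le>n. A k) \<inter> {x. c x < n})"
      using measure_truncation_gt[of A c "1 - \<epsilon>"] assms(7) c \<open>0 < \<epsilon>\<close>
      by (auto simp: space measurable_cong_sets[OF sets_eq refl])
    obtain Z where Z: "Z \<in> null_sets \<mu>"
      and "measurable_proper_coloring_on \<mu> G ((\<Union>k\<le>n. A k) \<inter> {x. c x < n} - Z) (Suc M)"
      using stagewise_coloring[where A = A and n = n, OF sets_eq NB sym fin assms(7,8,10) c Z0 c_proper]
      by blast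
    moreover have "(\<Union>k\<le>n. A k) \<inter> {x. c x < n} \<in> sets \<mu>"
      using assms(7) measurable_sets[OF c, of "{..<n}"] by (auto simp: sets_eq vimage_def)
    ultimately show "\<exists>B\<in>sets \<mu>. 1 - \<epsilon> < prob B \<and> measurable_proper_coloring_on \<mu> G B (Suc M)"
      using n by (intro bexI[of _ "(\<Union>k\<le>n. A k) \<inter> {x. c x < n} - Z"]) (auto simp: measure_Diff_null_set)
  qed
  then show ?thesis
    unfolding chi_ap_def by (intro Inf_lower) auto
qed

end
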